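(* Every simple $W^2$-module is isomorphic to one of the following: (1) $V(s_1,s_2)$ or $\Pi V(s_1,s_2)$ with $s_1\neq -s_2$ and $s_1,s_2\neq0$; (2) $V(s,0)$ with $s\neq0$; (3) $\Gamma_t$ or $\Pi\Gamma_t$ with $t\in\mathbb C$.
   Context: $U(\mathfrak h_2)$ is the superalgebra generated by odd $\xi_1,\xi_2$ with $\xi_1\xi_2+\xi_2\xi_1=0$, $x_i=\xi_i^2$; it is the enveloping algebra of the Cartan subalgebra of $Q(2)$. $W^2\subset U(\mathfrak h_2)$ is the principal finite $W$-algebra of $Q(2)$ realized via the injective Harish-Chandra homomorphism; it is generated by $\phi_0=\xi_1+\xi_2$, $\phi_1=x_2\xi_1-x_1\xi_2$, $z_0=x_1+x_2$, $z_1'=x_1x_2-\xi_1\xi_2$. For $\mathbf s\in\mathbb C^2$, $V(\mathbf s)$ is a simple $\mathbb Z_2$-graded $U(\mathfrak h_2)$-module with $x_i$ acting by $s_i$ (unique up to isomorphism and parity change), restricted to $W^2$. For $t\in\mathbb C$, $\Gamma_t$ is the $(1|0)$-dimensional $W^2$-module on which $\phi_0,\phi_1,z_0$ act by $0$ and $z_1'$ acts by $t$. *)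

theory Defs
  imports Main "HOL-Computational_Algebra.Polynomial"
begin

text \<open>Coefficient ring C[x1,x2], realised as complex poly poly
  (outer variable x2, inner variable x1).\<close>

definition px1 :: "complex poly poly" where "px1 = [:[:0, 1:]:]"
definition px2 :: "complex poly poly" where "px2 = [:0, 1:]"

text \<open>By PBW, U(h_2) is the free C[x1,x2]-module with basis 1, xi1, xi2, xi1 xi2,
  where x_i = xi_i^2 is central.  Uel a b c d represents a + b xi1 + c xi2 + d xi1 xi2.\<close>

datatype U = Uel "complex poly poly" "complex poly poly" "complex poly poly" "complex poly poly"

fun U_add :: "U \<Rightarrow> U \<Rightarrow> U" where
  "U_add (Uel a b c d) (Uel a' b' c' d') = Uel (a + a') (b + b') (c + c') (d + d')"

fun U_smul :: "complex \<Rightarrow> U \<Rightarrow> U" where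
  "U_smul k (Uel a b c d) = Uel (smult [:k:] a) (smult [:k:] b) (smult [:k:] c) (smult [:k:] d)"

definition U_neg :: "U \<Rightarrow> U" where "U_neg u = U_smul (-1) u"

text \<open>Multiplication, from xi1^2 = x1, xi2^2 = x2, xi1 xi2 + xi2 xi1 = 0.\<close>
fun U_mult :: "U \<Rightarrow> U \<Rightarrow> U" where
  "U_mult (Uel a b c d) (Uel a' b' c' d') =
     Uel (a * a' + px1 * b * b' + px2 * c * c' - px1 * px2 * d * d')
         (a * b' + b * a' - px2 * c * d' + px2 * d * c')
         (a * c' + c * a' + px1 * b * d' - px1 * d * b')
         (a * d' + d * a' + b * c' - c * b')"

definition U_one :: U where "U_one = Uel 1 0 0 0"
definition xi1 :: U where "xi1 = Uel 0 1 0 0"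
definition xi2 :: U where "xi2 = Uel 0 0 1 0"
definition x1 :: U where "x1 = U_mult xi1 xi1"
definition x2 :: U where "x2 = U_mult xi2 xi2"

fun U_even :: "U \<Rightarrow> bool" where "U_even (Uel a b c d) = (b = 0 \<and> c = 0)"
fun U_odd :: "U \<Rightarrow> bool" where "U_odd (Uel a b c d) = (a = 0 \<and> d = 0)"

definition phi0 :: U where "phi0 = U_add xi1 xi2"
definition phi1 :: U where "phi1 = U_add (U_mult x2 xi1) (U_neg (U_mult x1 xi2))"
definition z0 :: U where "z0 = U_add x1 x2"
definition z1' :: U where "z1' = U_add (U_mult x1 x2) (U_neg (U_mult xi1 xi2))"

inductive_set W2 :: "U set" where
  W2_one: "U_one \<in> W2"
| W2_phi0: "phi0 \<in> W2"
| W2_phi1: "phi1 \<in> W2"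
| W2_z0: "z0 \<in> W2"
| W2_z1': "z1' \<in> W2"
| W2_add: "u \<in> W2 \<Longrightarrow> v \<in> W2 \<Longrightarrow> U_add u v \<in> W2"
| W2_smul: "u \<in> W2 \<Longrightarrow> U_smul k u \<in> W2"
| W2_mult: "u \<in> W2 \<Longrightarrow> v \<in> W2 \<Longrightarrow> U_mult u v \<in> W2"

text \<open>The underlying complex vector space is the whole type 'v with scalar
  multiplication sc; V0, V1 are the even and odd parts.\<close>

definition grading :: "(complex \<Rightarrow> 'v::ab_group_add \<Rightarrow> 'v) \<Rightarrow> 'v set \<Rightarrow> 'v set \<Rightarrow> bool" where
  "grading sc V0 V1 \<longleftrightarrow> module.subspace sc V0 \<and> module.subspace sc V1 \<and>
     V0 \<inter> V1 = {0} \<and> (\<forall>x. \<exists>a\<in>V0. \<exists>b\<in>V1. x = a + b)"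

definition graded_module ::
  "U set \<Rightarrow> (complex \<Rightarrow> 'v::ab_group_add \<Rightarrow> 'v) \<Rightarrow> 'v set \<Rightarrow> 'v set \<Rightarrow> (U \<Rightarrow> 'v \<Rightarrow> 'v) \<Rightarrow> bool" where
  "graded_module A sc V0 V1 act \<longleftrightarrow>
     vector_space sc \<and> grading sc V0 V1 \<and>
     (\<forall>u\<in>A. Vector_Spaces.linear sc sc (act u)) \<and>
     (\<forall>u\<in>A. \<forall>v\<in>A. act (U_add u v) = (\<lambda>x. act u x + act v x)) \<and>
     (\<forall>k. \<forall>u\<in>A. act (U_smul k u) = (\<lambda>x. sc k (act u x))) \<and>
     (\<forall>u\<in>A. \<forall>v\<in>A. act (U_mult u v) = act u \<circ> act v) \<and>
     act U_one = id \<and>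
     (\<forall>u\<in>A. U_even u \<longrightarrow> act u ` V0 \<subseteq> V0 \<and> act u ` V1 \<subseteq> V1) \<and>
     (\<forall>u\<in>A. U_odd u \<longrightarrow> act u ` V0 \<subseteq> V1 \<and> act u ` V1 \<subseteq> V0)"

definition graded_submodule ::
  "U set \<Rightarrow> (complex \<Rightarrow> 'v::ab_group_add \<Rightarrow> 'v) \<Rightarrow> 'v set \<Rightarrow> 'v set \<Rightarrow> (U \<Rightarrow> 'v \<Rightarrow> 'v) \<Rightarrow> 'v set \<Rightarrow> bool" where
  "graded_submodule A sc V0 V1 act S \<longleftrightarrow>
     module.subspace sc S \<and> (\<forall>u\<in>A. act u ` S \<subseteq> S) \<and>
     (\<forall>x\<in>S. \<exists>a\<in>S \<inter> V0. \<exists>b\<in>S \<inter> V1. x = a + b)"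

definition simple_module ::
  "U set \<Rightarrow> (complex \<Rightarrow> 'v::ab_group_add \<Rightarrow> 'v) \<Rightarrow> 'v set \<Rightarrow> 'v set \<Rightarrow> (U \<Rightarrow> 'v \<Rightarrow> 'v) \<Rightarrow> bool" where
  "simple_module A sc V0 V1 act \<longleftrightarrow>
     graded_module A sc V0 V1 act \<and> (\<exists>x::'v. x \<noteq> 0) \<and>
     (\<forall>S. graded_submodule A sc V0 V1 act S \<longrightarrow> S = {0} \<or> S = UNIV)"

definition module_iso ::
  "U set \<Rightarrow> (complex \<Rightarrow> 'v::ab_group_add \<Rightarrow> 'v) \<Rightarrow> 'v set \<Rightarrow> 'v set \<Rightarrow> (U \<Rightarrow> 'v \<Rightarrow> 'v)
   \<Rightarrow> (complex \<Rightarrow> 'w::ab_group_add \<Rightarrow> 'w) \<Rightarrow> 'w set \<Rightarrow> 'w set \<Rightarrow> (U \<Rightarrow> 'w \<Rightarrow> 'w) \<Rightarrow> bool" where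
  "module_iso A sc V0 V1 act sc' W0 W1 act' \<longleftrightarrow>
     (\<exists>f. bij f \<and> Vector_Spaces.linear sc sc' f \<and> f ` V0 = W0 \<and> f ` V1 = W1 \<and>
          (\<forall>u\<in>A. \<forall>x. f (act u x) = act' u (f x)))"

end

(*
  W^2 is generated by four elements, so a simple W^2-module has countable dimension, and
  Dixmier's argument shows that an even central element acts on it by a scalar: z0 = phi0^2
  acts by some c and x1 x2 z0 = phi1^2 by some q.

  If c = 0, the joint kernel of phi0 and phi1 is a nonzero submodule, so both act by 0; then
  z1' is central too, acts by a scalar t, and the module is one-dimensional: Gamma_t or its
  parity shift.

  If c /= 0, write c = s1 + s2 and q = s1 s2 (s1 + s2). The operators
  xi1 = (s1 phi0 + phi1) / c and xi2 = (s2 phi0 - phi1) / c square to s1 and s2 and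
  anticommute, so they extend the action to U(h_2) with x_i acting by s_i. The extension is
  still simple and restricts to the given module, which is therefore V(s1, s2) or its parity
  shift.
*)

theory Submission
  imports Defs "HOL-Analysis.Continuum_Not_Denumerable"
    "HOL-Computational_Algebra.Fundamental_Theorem_Algebra"
begin

section \<open>Relations in U(h_2)\<close>

lemma smult_minus_one_const: "smult [:- 1:] p = - (p :: complex poly poly)"
proof -
  have "[:- 1:] = (- 1 :: complex poly)" by (simp add: one_pCons)
  then show ?thesis by simp
qed

lemma U_neg_Uel: "U_neg (Uel a b c d) = Uel (- a) (- b) (- c) (- d)"
  by (simp add: U_neg_def smult_minus_one_const)

lemma x1_eq: "x1 = Uel px1 0 0 0" by (simp add: x1_def xi1_def)
lemma x2_eq: "x2 = Uel px2 0 0 0" by (simp add: x2_def xi2_def)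
lemma phi0_eq: "phi0 = Uel 0 1 1 0" by (simp add: phi0_def xi1_def xi2_def)
lemma phi1_eq: "phi1 = Uel 0 px2 (- px1) 0"
  by (simp add: phi1_def xi1_def xi2_def x1_def x2_def U_neg_Uel)
lemma z0_eq: "z0 = Uel (px1 + px2) 0 0 0" by (simp add: z0_def x1_eq x2_eq)
lemma z1'_eq: "z1' = Uel (px1 * px2) 0 0 (- 1)"
  by (simp add: z1'_def xi1_def xi2_def x1_eq x2_eq U_neg_Uel)

definition x1x2z0 :: U where "x1x2z0 = Uel (px1 * px2 * (px1 + px2)) 0 0 0"

lemmas W2_generators_eq = phi0_eq phi1_eq z0_eq z1'_eq x1x2z0_def U_one_def

lemma phi0_square: "U_mult phi0 phi0 = z0"
  by (simp add: W2_generators_eq)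
lemma phi1_square: "U_mult phi1 phi1 = x1x2z0"
  by (simp add: W2_generators_eq algebra_simps)
lemma phi0_phi1_anticomm: "U_add (U_mult phi0 phi1) (U_mult phi1 phi0) = U_smul 0 U_one"
  by (simp add: W2_generators_eq algebra_simps)
lemma z0_z1'_plus_phi1_phi0: "U_add (U_mult z0 z1') (U_mult phi1 phi0) = x1x2z0"
  by (simp add: W2_generators_eq algebra_simps)
lemma phi0_z1'_comm:
  "U_mult phi0 z1' = U_add (U_mult z1' phi0) (U_add phi1 phi1)"
  by (simp add: W2_generators_eq algebra_simps)
lemma z1'_phi1_comm:
  "U_mult z1' phi1 =
     U_add (U_mult phi1 z1') (U_add (U_add (U_mult z1' phi0) (U_mult z1' phi0)) (U_add phi1 phi1))"
  by (simp add: W2_generators_eq algebra_simps)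
lemma z0_central: "U_mult z0 u = U_mult u z0"
  by (cases u) (simp add: W2_generators_eq algebra_simps)
lemma x1x2z0_central: "U_mult x1x2z0 u = U_mult u x1x2z0"
  by (cases u) (simp add: W2_generators_eq algebra_simps)

lemma x1x2z0_in_W2: "x1x2z0 \<in> W2"
  unfolding z0_z1'_plus_phi1_phi0[symmetric] by (intro W2.intros)

lemma U_odd_phi0: "U_odd phi0" and U_odd_phi1: "U_odd phi1"
  and U_even_z0: "U_even z0" and U_even_z1': "U_even z1'" and U_even_x1x2z0: "U_even x1x2z0"
  by (simp_all add: phi0_eq phi1_eq z0_eq z1'_eq x1x2z0_def)

section \<open>Dixmier's lemma\<close>

locale complex_vs = vector_space sc for sc :: "complex \<Rightarrow> 'v::ab_group_add \<Rightarrow> 'v"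
begin

sublocale endo: vector_space_pair sc sc ..

definition poly_op :: "('v \<Rightarrow> 'v) \<Rightarrow> complex poly \<Rightarrow> 'v \<Rightarrow> 'v" where
  "poly_op T p = fold_coeffs (\<lambda>a g y. sc a y + T (g y)) p (\<lambda>y. 0)"

context
  fixes T :: "'v \<Rightarrow> 'v"
  assumes T: "Vector_Spaces.linear sc sc T"
begin

lemma poly_op_0 [simp]: "poly_op T 0 y = 0"
  by (simp add: poly_op_def)

lemma poly_op_pCons [simp]: "poly_op T (pCons a p) y = sc a y + T (poly_op T p y)"
  by (cases "a = 0"; cases "p = 0") (simp_all add: poly_op_def endo.linear_0[OF T])

lemma linear_poly_op: "Vector_Spaces.linear sc sc (poly_op T p)"
proof -
  have "poly_op T p (y + z) = poly_op T p y + poly_op T p z" for y z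
    by (induct p) (simp_all add: endo.linear_add[OF T] scale_right_distrib algebra_simps)
  moreover have "poly_op T p (sc c y) = sc c (poly_op T p y)" for c y
    by (induct p) (simp_all add: endo.linear_scale[OF T] scale_right_distrib mult.commute)
  ultimately show ?thesis
    by (simp add: Vector_Spaces.linear_iff vector_space_axioms)
qed

lemma poly_op_add: "poly_op T (p + q) y = poly_op T p y + poly_op T q y"
proof (induct p arbitrary: q)
  case (pCons a p)
  then show ?case
    by (cases q) (simp add: endo.linear_add[OF T] scale_left_distrib algebra_simps)
qed simp

lemma poly_op_smult: "poly_op T (smult c p) y = sc c (poly_op T p y)"
  by (induct p) (simp_all add: endo.linear_scale[OF T] scale_right_distrib mult.commute)

lemma poly_op_mult: "poly_op T (p * q) y = poly_op T p (poly_op T q y)"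
  by (induct p) (simp_all add: poly_op_add poly_op_smult)

lemma poly_op_sum: "poly_op T (sum f A) y = (\<Sum>a\<in>A. poly_op T (f a) y)"
  by (induct A rule: infinite_finite_induct) (auto simp: poly_op_add)

lemma poly_op_linear_factor: "poly_op T [:- c, 1:] y = T y - sc c y"
  by (simp add: endo.linear_0[OF T])

lemma poly_op_eq_0_imp_eq_0:
  assumes inj: "\<And>c. inj (\<lambda>x. T x - sc c x)"
  shows "p \<noteq> 0 \<Longrightarrow> poly_op T p y = 0 \<Longrightarrow> y = 0"
proof (induct "degree p" arbitrary: p y rule: less_induct)
  case less
  show ?case
  proof (cases "degree p = 0")
    case True
    then obtain a where "a \<noteq> 0" "p = [:a:]"
      using less.prems(1) by (metis degree_eq_zeroE pCons_0_0)
    with less.prems show ?thesis by (simp add: endo.linear_0[OF T])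
  next
    case False
    then obtain r where "poly p r = 0"
      using fundamental_theorem_of_algebra_alt by (metis degree_pCons_0)
    then obtain q where pq: "p = [:- r, 1:] * q" by (metis dvdE poly_eq_0_iff_dvd)
    with less.prems have q0: "q \<noteq> 0" by auto
    have "degree p = degree [:- r, 1:] + degree q"
      unfolding pq using q0 by (intro degree_mult_eq) auto
    then have dq: "degree q < degree p" by simp
    have "poly_op T [:- r, 1:] (poly_op T q y) = 0"
      using less.prems(2) by (simp only: pq poly_op_mult)
    then have "T (poly_op T q y) - sc r (poly_op T q y) = T 0 - sc r 0"
      by (simp add: poly_op_linear_factor endo.linear_0[OF T])
    then have "poly_op T q y = 0" using inj_eq[OF inj[of r], of _ 0] by simp
    then show ?thesis using less.hyps[OF dq q0] by blast
  qed
qed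

end

lemma countable_independent_in_span:
  assumes ind: "independent S" and sp: "S \<subseteq> span B" and cB: "countable B"
  shows "countable S"
proof -
  define b where "b = from_nat_into B"
  have Bb: "B \<subseteq> range b"
    by (cases "B = {}") (simp_all add: b_def range_from_nat_into cB)
  have cover: "S \<subseteq> (\<Union>n. S \<inter> span (b ` {..<n}))"
  proof
    fix s assume sS: "s \<in> S"
    then obtain t r where t: "finite t" "t \<subseteq> B" "s = (\<Sum>a\<in>t. sc (r a) a)"
      using sp unfolding span_explicit by blast
    then obtain C where C: "finite C" "t = b ` C"
      using finite_subset_image[OF t(1)] Bb by (meson subset_trans)
    obtain n where "C \<subseteq> {..<n}" using finite_nat_bounded[OF C(1)] by blast
    then have "t \<subseteq> b ` {..<n}" using C(2) by blast
    moreover have "s \<in> span t" unfolding t(3) by (intro span_sum span_scale span_base)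
    ultimately have "s \<in> span (b ` {..<n})" using span_mono by blast
    then show "s \<in> (\<Union>n. S \<inter> span (b ` {..<n}))" using sS by blast
  qed
  have "finite (S \<inter> span (b ` {..<n}))" for n
    using independent_span_bound[of "b ` {..<n}" "S \<inter> span (b ` {..<n})"]
      independent_mono[OF ind] by auto
  then show ?thesis
    by (intro countable_subset[OF cover] countable_UN countableI_type) (simp add: countable_finite)
qed

lemma resolvent_combination_eq_0:
  assumes T: "Vector_Spaces.linear sc sc T" and inj: "\<And>c. inj (\<lambda>y. T y - sc c y)"
    and F: "\<And>c. T (F c) - sc c (F c) = x" and x: "x \<noteq> 0"
    and L: "finite L" and comb: "(\<Sum>c\<in>L. sc (a c) (F c)) = 0" and c0: "c0 \<in> L"
  shows "a c0 = 0"
proof -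
  define \<pi> where "\<pi> M = (\<Prod>\<mu>\<in>M. [:- \<mu>, 1:])" for M :: "complex set"
  have \<pi>_F: "poly_op T (\<pi> L) (F c) = poly_op T (\<pi> (L - {c})) x" if "c \<in> L" for c
  proof -
    have "\<pi> L = \<pi> (L - {c}) * [:- c, 1:]"
      unfolding \<pi>_def using prod.remove[OF L that] by (simp only: mult.commute)
    then show ?thesis by (simp only: poly_op_mult[OF T] poly_op_linear_factor[OF T] F)
  qed
  define q where "q = (\<Sum>c\<in>L. smult (a c) (\<pi> (L - {c})))"
  have "poly_op T q x = (\<Sum>c\<in>L. poly_op T (\<pi> L) (sc (a c) (F c)))"
    unfolding q_def poly_op_sum[OF T]
    by (intro sum.cong)
      (simp_all add: poly_op_smult[OF T] endo.linear_scale[OF linear_poly_op[OF T]] \<pi>_F)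
  also have "\<dots> = 0"
    using comb by (simp add: endo.linear_sum[OF linear_poly_op[OF T], symmetric]
        endo.linear_0[OF linear_poly_op[OF T]])
  finally have "q = 0" using poly_op_eq_0_imp_eq_0[OF T inj] x by blast
  have "poly q c0 = (\<Sum>c\<in>L. if c = c0 then a c0 * poly (\<pi> (L - {c0})) c0 else 0)"
    unfolding q_def poly_sum
    by (intro sum.cong) (auto simp: \<pi>_def poly_prod prod_zero_iff[OF finite_Diff[OF L]] c0)
  then have "a c0 * poly (\<pi> (L - {c0})) c0 = 0"
    using \<open>q = 0\<close> L c0 by simp
  moreover have "poly (\<pi> (L - {c0})) c0 \<noteq> 0"
    using L by (simp add: \<pi>_def poly_prod prod_zero_iff)
  ultimately show ?thesis by simp
qed

(* Dixmier: otherwise the vectors (T - c)^-1 x, c in the uncountable field, would be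
   linearly independent, which is impossible in countable dimension. *)
lemma exists_shift_not_bij:
  assumes B: "countable B" "span B = UNIV" and T: "Vector_Spaces.linear sc sc T"
    and x: "(x :: 'v) \<noteq> 0"
  shows "\<exists>c. \<not> bij (\<lambda>y. T y - sc c y)"
proof (rule ccontr)
  assume "\<not> ?thesis"
  then have bij: "bij (\<lambda>y. T y - sc c y)" for c by blast
  define F where "F c = inv (\<lambda>y. T y - sc c y) x" for c
  have F: "T (F c) - sc c (F c) = x" for c
    unfolding F_def using bij_inv_eq_iff[OF bij[of c]] by metis
  have comb_0: "\<forall>c\<in>L. a c = 0" if "finite L" "(\<Sum>c\<in>L. sc (a c) (F c)) = 0" for L a
    using resolvent_combination_eq_0[OF T bij_is_inj[OF bij] F x that] by blast
  have "inj F"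
  proof
    fix c d assume "F c = F d"
    show "c = d"
    proof (rule ccontr)
      assume "c \<noteq> d"
      then have "(\<Sum>e\<in>{c, d}. sc (if e = c then 1 else - 1) (F e)) = 0"
        using \<open>F c = F d\<close> by simp
      then show False using comb_0[of "{c, d}" "\<lambda>e. if e = c then 1 else - 1"] by simp
    qed
  qed
  have "independent (range F)"
    unfolding independent_explicit_finite_subsets
  proof (intro allI impI ballI)
    fix S u v assume S: "S \<subseteq> range F" "finite S" and s: "(\<Sum>v\<in>S. sc (u v) v) = 0" and "v \<in> S"
    define L where "L = F -` S"
    have SL: "S = F ` L" unfolding L_def using S(1) by blast
    have "finite L" unfolding L_def using S(2) \<open>inj F\<close> by (rule finite_vimageI)
    moreover have "(\<Sum>c\<in>L. sc (u (F c)) (F c)) = 0"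
      using s unfolding SL by (simp add: sum.reindex[OF inj_on_subset[OF \<open>inj F\<close>]])
    ultimately have "\<forall>c\<in>L. u (F c) = 0" by (rule comb_0)
    then show "u v = 0" using \<open>v \<in> S\<close> SL by blast
  qed
  then have "countable (range F)"
    by (rule countable_independent_in_span[OF _ _ B(1)]) (simp add: B(2))
  then have "countable (UNIV :: complex set)" by (rule countable_image_inj_on[OF _ \<open>inj F\<close>])
  then show False using uncountable_UNIV_complex by blast
qed

end

section \<open>Representations of U(h_2) from anticommuting pairs\<close>

(* px1 is the inner and px2 the outer polynomial variable. *)
definition eval2 :: "complex \<Rightarrow> complex \<Rightarrow> complex poly poly \<Rightarrow> complex" where
  "eval2 s1 s2 p = poly (poly p [:s2:]) s1"

lemma eval2_simps [simp]:
  "eval2 s1 s2 (p + q) = eval2 s1 s2 p + eval2 s1 s2 q"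
  "eval2 s1 s2 (p - q) = eval2 s1 s2 p - eval2 s1 s2 q"
  "eval2 s1 s2 (p * q) = eval2 s1 s2 p * eval2 s1 s2 q"
  "eval2 s1 s2 (- p) = - eval2 s1 s2 p"
  "eval2 s1 s2 (smult [:k:] p) = k * eval2 s1 s2 p"
  "eval2 s1 s2 0 = 0" "eval2 s1 s2 1 = 1"
  "eval2 s1 s2 px1 = s1" "eval2 s1 s2 px2 = s2"
  by (simp_all add: eval2_def px1_def px2_def)

locale anticommuting_pair = complex_vs sc for sc :: "complex \<Rightarrow> 'v::ab_group_add \<Rightarrow> 'v" +
  fixes P Q :: "'v \<Rightarrow> 'v" and \<alpha> \<beta> :: complex
  assumes linear_P: "Vector_Spaces.linear sc sc P" and linear_Q: "Vector_Spaces.linear sc sc Q"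
    and P_square: "P (P y) = sc \<alpha> y" and Q_square: "Q (Q y) = sc \<beta> y"
    and anticomm: "Q (P y) = - P (Q y)"
begin

(* Composites of P and Q applied to y stay in this span (comb_P, comb_Q), so identities
   between such composites reduce to identities between four coefficients. *)
definition comb :: "'v \<Rightarrow> complex \<Rightarrow> complex \<Rightarrow> complex \<Rightarrow> complex \<Rightarrow> 'v" where
  "comb y a b e f = sc a y + sc b (P y) + sc e (Q y) + sc f (P (Q y))"

lemma comb_cong: "a = a' \<Longrightarrow> b = b' \<Longrightarrow> e = e' \<Longrightarrow> f = f' \<Longrightarrow> comb y a b e f = comb y a' b' e' f'"
  by simp

lemma comb_unit: "comb y 1 0 0 0 = y"
  by (simp add: comb_def)

lemma comb_add: "comb y a b e f + comb y a' b' e' f' = comb y (a + a') (b + b') (e + e') (f + f')"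
  by (simp add: comb_def scale_left_distrib algebra_simps)

lemma comb_scale: "sc k (comb y a b e f) = comb y (k * a) (k * b) (k * e) (k * f)"
  by (simp add: comb_def scale_right_distrib)

lemma comb_diff: "comb y a b e f - comb y a' b' e' f' = comb y (a - a') (b - b') (e - e') (f - f')"
  by (simp add: comb_def scale_left_diff_distrib algebra_simps)

lemma comb_neg: "- comb y a b e f = comb y (- a) (- b) (- e) (- f)"
  by (simp add: comb_def scale_minus_left algebra_simps)

lemma comb_P: "P (comb y a b e f) = comb y (\<alpha> * b) a (\<alpha> * f) e"
  by (simp add: comb_def endo.linear_add[OF linear_P] endo.linear_scale[OF linear_P] P_square
      algebra_simps)

lemma comb_Q: "Q (comb y a b e f) = comb y (\<beta> * e) (- (\<beta> * f)) a (- b)"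
proof -
  have "Q (P (Q y)) = sc (- \<beta>) (P y)"
    by (simp add: anticomm Q_square endo.linear_neg[OF linear_Q] endo.linear_scale[OF linear_P])
  then show ?thesis
    by (simp add: comb_def endo.linear_add[OF linear_Q] endo.linear_scale[OF linear_Q] Q_square
        anticomm algebra_simps)
qed

lemmas comb_simps = comb_add comb_diff comb_neg comb_scale comb_P comb_Q

(* xi1, xi2 act as P, Q and x1, x2 as alpha, beta. *)
definition rep :: "U \<Rightarrow> 'v \<Rightarrow> 'v" where
  "rep u y = (case u of Uel p q r s \<Rightarrow>
     comb y (eval2 \<alpha> \<beta> p) (eval2 \<alpha> \<beta> q) (eval2 \<alpha> \<beta> r) (eval2 \<alpha> \<beta> s))"

lemma rep_Uel:
  "rep (Uel p q r s) y = comb y (eval2 \<alpha> \<beta> p) (eval2 \<alpha> \<beta> q) (eval2 \<alpha> \<beta> r) (eval2 \<alpha> \<beta> s)"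
  by (simp add: rep_def)

lemma comb_comb:
  "comb (comb y a' b' e' f') a b e f =
     comb y (a * a' + \<alpha> * b * b' + \<beta> * e * e' - \<alpha> * \<beta> * f * f')
       (a * b' + b * a' - \<beta> * e * f' + \<beta> * f * e')
       (a * e' + e * a' + \<alpha> * b * f' - \<alpha> * f * b')
       (a * f' + f * a' + b * e' - e * b')"
  unfolding comb_def[of "comb y a' b' e' f'"]
  by (simp only: comb_simps) (rule comb_cong; simp add: algebra_simps)

lemma rep_mult: "rep (U_mult u w) y = rep u (rep w y)"
  by (cases u; cases w) (simp add: rep_Uel comb_comb)

lemma rep_add: "rep (U_add u w) y = rep u y + rep w y"
  by (cases u; cases w) (simp add: rep_Uel comb_add)

lemma rep_smul: "rep (U_smul k u) y = sc k (rep u y)"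
  by (cases u) (simp add: rep_Uel comb_scale)

lemma rep_one: "rep U_one y = y"
  by (simp add: U_one_def rep_Uel comb_unit)

lemma linear_rep: "Vector_Spaces.linear sc sc (rep u)"
proof (cases u)
  case (Uel p q r s)
  show ?thesis
    unfolding Uel Vector_Spaces.linear_iff rep_Uel comb_def
    by (simp add: vector_space_axioms endo.linear_add[OF linear_P] endo.linear_add[OF linear_Q]
        endo.linear_scale[OF linear_P] endo.linear_scale[OF linear_Q] scale_right_distrib
        algebra_simps)
qed

lemma graded_module_rep:
  assumes grading: "grading sc V0 V1"
    and P: "P ` V0 \<subseteq> V1" "P ` V1 \<subseteq> V0" and Q: "Q ` V0 \<subseteq> V1" "Q ` V1 \<subseteq> V0"
  shows "graded_module UNIV sc V0 V1 rep"
proof -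
  have V: "subspace V0" "subspace V1" using grading by (simp_all add: grading_def)
  note closure = subspace_add[OF V(1)] subspace_add[OF V(2)] subspace_scale[OF V(1)]
    subspace_scale[OF V(2)] subspace_0[OF V(1)] subspace_0[OF V(2)]
  have parity: "rep (Uel a 0 0 d) y \<in> V0" "rep (Uel 0 b c 0) y \<in> V1" if "y \<in> V0" for a b c d y
    using that P Q by (auto simp: rep_Uel comb_def image_subset_iff intro!: closure)
  have parity': "rep (Uel a 0 0 d) y \<in> V1" "rep (Uel 0 b c 0) y \<in> V0" if "y \<in> V1" for a b c d y
    using that P Q by (auto simp: rep_Uel comb_def image_subset_iff intro!: closure)
  show ?thesis
    unfolding graded_module_def
  proof (intro conjI ballI allI impI vector_space_axioms grading linear_rep)
    fix u v k
    show "rep (U_add u v) = (\<lambda>x. rep u x + rep v x)" by (simp add: fun_eq_iff rep_add)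
    show "rep (U_smul k u) = (\<lambda>x. sc k (rep u x))" by (simp add: fun_eq_iff rep_smul)
    show "rep (U_mult u v) = rep u \<circ> rep v" by (simp add: fun_eq_iff rep_mult)
    show "rep U_one = id" by (simp add: fun_eq_iff rep_one)
  next
    fix u :: U assume "U_even u"
    then show "rep u ` V0 \<subseteq> V0" "rep u ` V1 \<subseteq> V1"
      using parity(1) parity'(1) by (cases u; auto)+
  next
    fix u :: U assume "U_odd u"
    then show "rep u ` V0 \<subseteq> V1" "rep u ` V1 \<subseteq> V0"
      using parity(2) parity'(2) by (cases u; auto)+
  qed
qed

(* The solution of P = xi1 + xi2, Q = s2 xi1 - s1 xi2. *)
definition xi1_op :: "complex \<Rightarrow> complex \<Rightarrow> 'v \<Rightarrow> 'v" where
  "xi1_op s1 s2 y = sc (1 / (s1 + s2)) (sc s1 (P y) + Q y)"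

definition xi2_op :: "complex \<Rightarrow> complex \<Rightarrow> 'v \<Rightarrow> 'v" where
  "xi2_op s1 s2 y = sc (1 / (s1 + s2)) (sc s2 (P y) - Q y)"

context
  fixes s1 s2 :: complex
  assumes \<alpha>: "\<alpha> = s1 + s2" and \<beta>: "\<beta> = s1 * s2 * (s1 + s2)" and nz: "s1 + s2 \<noteq> 0"
begin

lemma obtain_inverse_sum:
  obtains i where "i * (s1 + s2) = 1" "\<And>x. x / (s1 + s2) = x * i"
  by (rule that[of "inverse (s1 + s2)"]) (simp_all add: nz divide_inverse)

lemma comb_xi1_op:
  "xi1_op s1 s2 (comb y a b e f) =
     comb y ((s1 * \<alpha> * b + \<beta> * e) / (s1 + s2)) ((s1 * a - \<beta> * f) / (s1 + s2))
       ((s1 * \<alpha> * f + a) / (s1 + s2)) ((s1 * e - b) / (s1 + s2))"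
  unfolding xi1_op_def by (simp only: comb_simps) (rule comb_cong; simp add: field_simps)

lemma comb_xi2_op:
  "xi2_op s1 s2 (comb y a b e f) =
     comb y ((s2 * \<alpha> * b - \<beta> * e) / (s1 + s2)) ((s2 * a + \<beta> * f) / (s1 + s2))
       ((s2 * \<alpha> * f - a) / (s1 + s2)) ((s2 * e + b) / (s1 + s2))"
  unfolding xi2_op_def by (simp only: comb_simps) (rule comb_cong; simp add: field_simps)

lemma xi_op_identities:
  shows xi1_op_square: "xi1_op s1 s2 (xi1_op s1 s2 y) = sc s1 y"
    and xi2_op_square: "xi2_op s1 s2 (xi2_op s1 s2 y) = sc s2 y"
    and xi_ops_anticomm: "xi2_op s1 s2 (xi1_op s1 s2 y) = - xi1_op s1 s2 (xi2_op s1 s2 y)"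
    and P_eq_xi_ops: "P y = xi1_op s1 s2 y + xi2_op s1 s2 y"
    and Q_eq_xi_ops: "Q y = sc s2 (xi1_op s1 s2 y) - sc s1 (xi2_op s1 s2 y)"
    and xi1_op_xi2_op: "xi1_op s1 s2 (xi2_op s1 s2 y) = sc (1 / (s1 + s2)) (Q (P y))"
proof -
  obtain i where i: "i * (s1 + s2) = 1" and div: "\<And>x. x / (s1 + s2) = x * i"
    using obtain_inverse_sum by blast
  note coords = comb_simps comb_xi1_op comb_xi2_op div \<alpha> \<beta>
  \<comment> \<open>With i opaque, each coefficient identity is an ideal membership problem for
    \<open>algebra\<close>; that method fails on plain ring identities, which simp handles.\<close>
  let ?y = "comb y 1 0 0 0"
  have "xi1_op s1 s2 (xi1_op s1 s2 ?y) = sc s1 ?y"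
    "xi2_op s1 s2 (xi2_op s1 s2 ?y) = sc s2 ?y"
    "xi2_op s1 s2 (xi1_op s1 s2 ?y) = - xi1_op s1 s2 (xi2_op s1 s2 ?y)"
    "P ?y = xi1_op s1 s2 ?y + xi2_op s1 s2 ?y"
    "Q ?y = sc s2 (xi1_op s1 s2 ?y) - sc s1 (xi2_op s1 s2 ?y)"
    "xi1_op s1 s2 (xi2_op s1 s2 ?y) = sc (1 / (s1 + s2)) (Q (P ?y))"
    by (simp_all only: coords)
      (rule comb_cong; ((simp add: algebra_simps; fail) | use i in algebra))+
  then show "xi1_op s1 s2 (xi1_op s1 s2 y) = sc s1 y"
    "xi2_op s1 s2 (xi2_op s1 s2 y) = sc s2 y"
    "xi2_op s1 s2 (xi1_op s1 s2 y) = - xi1_op s1 s2 (xi2_op s1 s2 y)"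
    "P y = xi1_op s1 s2 y + xi2_op s1 s2 y"
    "Q y = sc s2 (xi1_op s1 s2 y) - sc s1 (xi2_op s1 s2 y)"
    "xi1_op s1 s2 (xi2_op s1 s2 y) = sc (1 / (s1 + s2)) (Q (P y))"
    by (simp_all only: comb_unit)
qed

lemma anticommuting_pair_xi_ops: "anticommuting_pair sc (xi1_op s1 s2) (xi2_op s1 s2) s1 s2"
proof (intro anticommuting_pair.intro anticommuting_pair_axioms.intro complex_vs_axioms
    xi1_op_square xi2_op_square xi_ops_anticomm)
  show "Vector_Spaces.linear sc sc (xi1_op s1 s2)" "Vector_Spaces.linear sc sc (xi2_op s1 s2)"
    unfolding xi1_op_def xi2_op_def Vector_Spaces.linear_iff
    by (simp_all add: vector_space_axioms endo.linear_add[OF linear_P] endo.linear_add[OF linear_Q]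
        endo.linear_scale[OF linear_P] endo.linear_scale[OF linear_Q] endo.linear_diff[OF linear_Q]
        scale_right_distrib scale_right_diff_distrib algebra_simps)
qed

end

end

section \<open>Graded modules\<close>

locale graded_mod =
  fixes A :: "U set" and sc :: "complex \<Rightarrow> 'v::ab_group_add \<Rightarrow> 'v"
    and V0 V1 :: "'v set" and act :: "U \<Rightarrow> 'v \<Rightarrow> 'v"
  assumes graded_module: "graded_module A sc V0 V1 act"
begin

sublocale complex_vs sc
  using graded_module by (simp add: graded_module_def complex_vs_def)

lemma linear_act: "u \<in> A \<Longrightarrow> Vector_Spaces.linear sc sc (act u)"
  using graded_module by (simp add: graded_module_def)

lemma act_add: "u \<in> A \<Longrightarrow> v \<in> A \<Longrightarrow> act (U_add u v) x = act u x + act v x"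
  using graded_module by (simp add: graded_module_def)

lemma act_smul: "u \<in> A \<Longrightarrow> act (U_smul k u) x = sc k (act u x)"
  using graded_module by (simp add: graded_module_def)

lemma act_mult: "u \<in> A \<Longrightarrow> v \<in> A \<Longrightarrow> act (U_mult u v) x = act u (act v x)"
  using graded_module by (simp add: graded_module_def)

lemma act_one: "act U_one x = x"
  using graded_module by (simp add: graded_module_def)

lemma act_even:
  assumes "u \<in> A" "U_even u"
  shows "x \<in> V0 \<Longrightarrow> act u x \<in> V0" and "x \<in> V1 \<Longrightarrow> act u x \<in> V1"
  using graded_module assms by (auto simp: graded_module_def image_subset_iff)

lemma act_odd:
  assumes "u \<in> A" "U_odd u"
  shows "x \<in> V0 \<Longrightarrow> act u x \<in> V1" and "x \<in> V1 \<Longrightarrow> act u x \<in> V0"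
  using graded_module assms by (auto simp: graded_module_def image_subset_iff)

lemma grading: "grading sc V0 V1"
  using graded_module by (simp add: graded_module_def)

lemma subspace_V0: "subspace V0" and subspace_V1: "subspace V1"
  and V0_Int_V1: "V0 \<inter> V1 = {0}" and homogeneous_decomp: "\<exists>a\<in>V0. \<exists>b\<in>V1. x = a + b"
  using grading by (simp_all add: grading_def)

lemma obtain_homogeneous:
  assumes "(x :: 'v) \<noteq> 0"
  obtains v where "v \<noteq> 0" "v \<in> V0 \<union> V1"
  using homogeneous_decomp[of x] assms by (metis Un_iff add.left_neutral)

lemma homogeneous_components_in_kernel:
  assumes D: "Vector_Spaces.linear sc sc D"
    and hom: "(D ` V0 \<subseteq> V0 \<and> D ` V1 \<subseteq> V1) \<or> (D ` V0 \<subseteq> V1 \<and> D ` V1 \<subseteq> V0)"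
    and x: "D x = 0" "x = a + b" "a \<in> V0" "b \<in> V1"
  shows "D a = 0" "D b = 0"
proof -
  have "D a = - D b"
    using x by (simp add: endo.linear_add[OF D] eq_neg_iff_add_eq_0)
  moreover have "D a \<in> V0 \<inter> V1"
    using hom x(3,4) calculation subspace_neg[OF subspace_V0] subspace_neg[OF subspace_V1]
    by (metis IntI image_subset_iff minus_minus)
  ultimately show "D a = 0" "D b = 0"
    using V0_Int_V1 by auto
qed

lemma graded_submodule_span:
  assumes H: "H \<subseteq> V0 \<union> V1" and stable: "\<And>u. u \<in> A \<Longrightarrow> act u ` span H \<subseteq> span H"
  shows "graded_submodule A sc V0 V1 act (span H)"
proof -
  have "\<exists>a\<in>span H \<inter> V0. \<exists>b\<in>span H \<inter> V1. x = a + b" if "x \<in> span H" for x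
  proof -
    have "H \<subseteq> (H \<inter> V0) \<union> (H \<inter> V1)" using H by blast
    then have "x \<in> span ((H \<inter> V0) \<union> (H \<inter> V1))" using span_mono that by blast
    then obtain a b where ab: "x = a + b" "a \<in> span (H \<inter> V0)" "b \<in> span (H \<inter> V1)"
      unfolding span_Un by blast
    have "a \<in> V0" "b \<in> V1"
      using ab span_minimal[OF Int_lower2 subspace_V0] span_minimal[OF Int_lower2 subspace_V1]
      by blast+
    moreover have "a \<in> span H" "b \<in> span H"
      using ab span_mono[OF Int_lower1] by blast+
    ultimately show ?thesis using ab by blast
  qed
  then show ?thesis
    unfolding graded_submodule_def using subspace_span stable by blast
qed

context
  fixes D :: "'v \<Rightarrow> 'v"
  assumes D: "Vector_Spaces.linear sc sc D"
    and comm: "\<And>u x. u \<in> A \<Longrightarrow> D (act u x) = act u (D x)"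
    and even: "D ` V0 \<subseteq> V0" "D ` V1 \<subseteq> V1"
begin

lemma graded_submodule_kernel: "graded_submodule A sc V0 V1 act {x. D x = 0}"
  unfolding graded_submodule_def
proof (intro conjI ballI)
  show "subspace {x. D x = 0}"
    using endo.linear_subspace_kernel[OF D] by (simp add: vimage_def)
  show "act u ` {x. D x = 0} \<subseteq> {x. D x = 0}" if "u \<in> A" for u
    using comm[OF that] endo.linear_0[OF linear_act[OF that]] by auto
  fix x assume "x \<in> {x. D x = 0}"
  moreover obtain a b where ab: "x = a + b" "a \<in> V0" "b \<in> V1" using homogeneous_decomp by blast
  ultimately have "D a = 0" "D b = 0"
    using homogeneous_components_in_kernel[OF D _ _ ab] even by auto
  then show "\<exists>a\<in>{x. D x = 0} \<inter> V0. \<exists>b\<in>{x. D x = 0} \<inter> V1. x = a + b"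
    using ab by blast
qed

lemma graded_submodule_range: "graded_submodule A sc V0 V1 act (range D)"
  unfolding graded_submodule_def
proof (intro conjI ballI)
  show "subspace (range D)"
    using endo.linear_subspace_image[OF D subspace_UNIV] .
  show "act u ` range D \<subseteq> range D" if "u \<in> A" for u
  proof (rule image_subsetI)
    fix y assume "y \<in> range D"
    then obtain z where "y = D z" by blast
    then show "act u y \<in> range D" using comm[OF that, of z] rangeI[of D "act u z"] by simp
  qed
  fix x assume "x \<in> range D"
  then obtain y where y: "x = D y" by blast
  obtain a b where "a \<in> V0" "b \<in> V1" "y = a + b" using homogeneous_decomp by blast
  then have "D a \<in> range D \<inter> V0" "D b \<in> range D \<inter> V1" "x = D a + D b"
    using y even endo.linear_add[OF D] by auto
  then show "\<exists>a\<in>range D \<inter> V0. \<exists>b\<in>range D \<inter> V1. x = a + b" by blast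
qed

end

lemma grading_image:
  assumes sc': "vector_space sc'" and f: "Vector_Spaces.linear sc sc' f" and "inj f"
    and g: "\<And>y. f (g y) = y"
  shows "grading sc' (f ` V0) (f ` V1)"
  unfolding grading_def
proof (intro conjI allI)
  interpret fg: vector_space_pair sc sc'
    using sc' by (simp add: vector_space_pair_def vector_space_axioms)
  show "fg.vs2.subspace (f ` V0)" "fg.vs2.subspace (f ` V1)"
    using fg.linear_subspace_image[OF f] subspace_V0 subspace_V1 by blast+
  show "f ` V0 \<inter> f ` V1 = {0}"
    using V0_Int_V1 image_Int[OF \<open>inj f\<close>, of V0 V1] fg.linear_0[OF f] by simp
  fix y
  obtain a b where "a \<in> V0" "b \<in> V1" "g y = a + b" using homogeneous_decomp by blast
  then show "\<exists>a\<in>f ` V0. \<exists>b\<in>f ` V1. y = a + b"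
    using g[of y] fg.linear_add[OF f] by (metis imageI)
qed

lemma graded_module_transport:
  assumes sc': "vector_space sc'" and f: "Vector_Spaces.linear sc sc' f"
    and g: "Vector_Spaces.linear sc' sc g" and gf: "\<And>x. g (f x) = x" and fg: "\<And>y. f (g y) = y"
  shows "graded_module A sc' (f ` V0) (f ` V1) (\<lambda>u. f \<circ> act u \<circ> g)"
    and "module_iso A sc V0 V1 act sc' (f ` V0) (f ` V1) (\<lambda>u. f \<circ> act u \<circ> g)"
proof -
  interpret fg: vector_space_pair sc sc'
    using sc' by (simp add: vector_space_pair_def vector_space_axioms)
  have "bij f" by (rule o_bij[of g]) (simp_all add: fun_eq_iff gf fg)
  note grading' = grading_image[OF sc' f bij_is_inj[OF this] fg]
  show "graded_module A sc' (f ` V0) (f ` V1) (\<lambda>u. f \<circ> act u \<circ> g)"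
    unfolding graded_module_def
  proof (intro conjI ballI allI impI sc' grading')
    fix u v k assume u: "u \<in> A"
    show "Vector_Spaces.linear sc' sc' (f \<circ> act u \<circ> g)"
      using Vector_Spaces.linear_compose[OF Vector_Spaces.linear_compose[OF g linear_act[OF u]] f]
      by (simp add: o_assoc)
    show "f \<circ> act (U_smul k u) \<circ> g = (\<lambda>x. sc' k ((f \<circ> act u \<circ> g) x))"
      using u by (simp add: fun_eq_iff act_smul fg.linear_scale[OF f])
    assume v: "v \<in> A"
    show "f \<circ> act (U_add u v) \<circ> g = (\<lambda>x. (f \<circ> act u \<circ> g) x + (f \<circ> act v \<circ> g) x)"
      using u v by (simp add: fun_eq_iff act_add fg.linear_add[OF f])
    show "f \<circ> act (U_mult u v) \<circ> g = (f \<circ> act u \<circ> g) \<circ> (f \<circ> act v \<circ> g)"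
      using u v by (simp add: fun_eq_iff act_mult gf)
  next
    show "f \<circ> act U_one \<circ> g = id" by (simp add: fun_eq_iff act_one fg)
  next
    fix u assume "u \<in> A" "U_even u"
    then show "(f \<circ> act u \<circ> g) ` f ` V0 \<subseteq> f ` V0" "(f \<circ> act u \<circ> g) ` f ` V1 \<subseteq> f ` V1"
      using act_even by (auto simp: gf)
  next
    fix u assume "u \<in> A" "U_odd u"
    then show "(f \<circ> act u \<circ> g) ` f ` V0 \<subseteq> f ` V1" "(f \<circ> act u \<circ> g) ` f ` V1 \<subseteq> f ` V0"
      using act_odd by (auto simp: gf)
  qed
  show "module_iso A sc V0 V1 act sc' (f ` V0) (f ` V1) (\<lambda>u. f \<circ> act u \<circ> g)"
    unfolding module_iso_def
    using \<open>bij f\<close> f gf by (intro exI[of _ f]) auto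
qed

lemma graded_module_line:
  assumes v: "v \<noteq> 0" "v \<in> V0 \<union> V1" and span_v: "span {v} = UNIV"
  obtains f :: "'v \<Rightarrow> complex"
  where "\<And>k. f (sc k v) = k" and "(f ` V0, f ` V1) \<in> {(UNIV, {0}), ({0}, UNIV)}"
    and "graded_module A (*) (f ` V0) (f ` V1) (\<lambda>u. f \<circ> act u \<circ> (\<lambda>k. sc k v))"
    and "module_iso A sc V0 V1 act (*) (f ` V0) (f ` V1) (\<lambda>u. f \<circ> act u \<circ> (\<lambda>k. sc k v))"
proof -
  interpret line: vector_space_pair "(*) :: complex \<Rightarrow> complex \<Rightarrow> complex" sc
    by (simp add: vector_space_pair_def vector_space_axioms vector_space_def algebra_simps)
  define g where "g k = sc k v" for k
  have g: "Vector_Spaces.linear (*) sc g"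
    unfolding g_def Vector_Spaces.linear_iff
    by (simp add: line.vs1.vector_space_axioms vector_space_axioms scale_left_distrib)
  have "inj g" unfolding g_def inj_def using v(1) by simp
  then obtain f where f: "Vector_Spaces.linear sc (*) f" and fg: "f \<circ> g = id"
    using line.linear_injective_left_inverse[OF g] by blast
  have f_scale: "f (sc k v) = k" for k using fg by (simp add: g_def fun_eq_iff)
  have gf: "g (f y) = y" for y
  proof -
    obtain k where "y = sc k v" using span_v span_singleton by blast
    then show ?thesis by (simp add: f_scale g_def)
  qed
  have f0: "f 0 = 0" using f_scale[of 0] by simp
  have "range f = UNIV" using f_scale by (intro surjI[of f "\<lambda>k. sc k v"])
  moreover have "V0 = UNIV \<and> V1 = {0} \<or> V0 = {0} \<and> V1 = UNIV"
    using v(2)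
  proof
    assume "v \<in> V0"
    then have "V0 = UNIV" using span_minimal[OF _ subspace_V0, of "{v}"] span_v by auto
    then show ?thesis using V0_Int_V1 by simp
  next
    assume "v \<in> V1"
    then have "V1 = UNIV" using span_minimal[OF _ subspace_V1, of "{v}"] span_v by auto
    then show ?thesis using V0_Int_V1 by simp
  qed
  ultimately have grading: "(f ` V0, f ` V1) \<in> {(UNIV, {0}), ({0}, UNIV)}" using f0 by auto
  have "f (g k) = k" for k using f_scale by (simp add: g_def)
  note transport = graded_module_transport[OF line.vs1.vector_space_axioms f g gf this]
  show ?thesis
    by (rule that[OF f_scale grading transport[unfolded g_def]])
qed

lemma module_iso_agreeing_action:
  assumes "\<And>u x. u \<in> A \<Longrightarrow> \<rho> u x = act u x"
  shows "module_iso A sc V0 V1 act sc V0 V1 \<rho>"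
  unfolding module_iso_def using assms linear_id by (intro exI[of _ id]) auto

end

section \<open>Simple W^2-modules\<close>

locale W2_module = graded_mod W2 sc V0 V1 act
  for sc :: "complex \<Rightarrow> 'v::ab_group_add \<Rightarrow> 'v" and V0 V1 act
begin

lemma W2_stable:
  assumes S: "subspace S" and gen: "\<And>g. g \<in> {phi0, phi1, z0, z1'} \<Longrightarrow> act g ` S \<subseteq> S"
  shows "u \<in> W2 \<Longrightarrow> act u ` S \<subseteq> S"
proof (induct u rule: W2.induct)
  case (W2_add u v) then show ?case using subspace_add[OF S] by (auto simp: act_add)
next
  case (W2_smul u k) then show ?case using subspace_scale[OF S] by (auto simp: act_smul)
next
  case (W2_mult u v) then show ?case by (auto simp: act_mult)
qed (use gen in \<open>auto simp: act_one\<close>)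

lemma W2_commute:
  assumes T: "Vector_Spaces.linear sc sc T"
    and gen: "\<And>g x. g \<in> {phi0, phi1, z0, z1'} \<Longrightarrow> T (act g x) = act g (T x)"
  shows "u \<in> W2 \<Longrightarrow> T (act u x) = act u (T x)"
proof (induct u arbitrary: x rule: W2.induct)
  case (W2_add u v) then show ?case by (simp add: act_add endo.linear_add[OF T])
next
  case (W2_smul u k) then show ?case by (simp add: act_smul endo.linear_scale[OF T])
next
  case (W2_mult u v) then show ?case by (simp add: act_mult)
qed (simp_all add: gen act_one)

lemma act_phi0_phi0: "act phi0 (act phi0 x) = act z0 x"
  using act_mult[OF W2_phi0 W2_phi0, of x] by (simp add: phi0_square)

lemma act_phi1_phi1: "act phi1 (act phi1 x) = act x1x2z0 x"
  using act_mult[OF W2_phi1 W2_phi1, of x] by (simp add: phi1_square)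

lemma act_phi0_phi1: "act phi0 (act phi1 x) = - act phi1 (act phi0 x)"
proof -
  have "act (U_add (U_mult phi0 phi1) (U_mult phi1 phi0)) x = 0"
    by (simp add: phi0_phi1_anticomm act_smul W2.intros)
  then show ?thesis by (simp add: act_add act_mult W2.intros eq_neg_iff_add_eq_0)
qed

lemma act_z0_z1': "act z0 (act z1' x) + act phi1 (act phi0 x) = act x1x2z0 x"
  by (metis z0_z1'_plus_phi1_phi0 act_add act_mult W2.intros)

lemma act_phi0_z1': "act phi0 (act z1' x) = act z1' (act phi0 x) + (act phi1 x + act phi1 x)"
  by (metis phi0_z1'_comm act_add act_mult W2.intros)

lemma act_z1'_phi1:
  "act z1' (act phi1 x) =
     act phi1 (act z1' x) +
       ((act z1' (act phi0 x) + act z1' (act phi0 x)) + (act phi1 x + act phi1 x))"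
  by (metis z1'_phi1_comm act_add act_mult W2.intros)

lemma act_z0_commute: "u \<in> W2 \<Longrightarrow> act z0 (act u x) = act u (act z0 x)"
  by (metis z0_central act_mult W2.intros)

lemma act_x1x2z0_commute: "u \<in> W2 \<Longrightarrow> act x1x2z0 (act u x) = act u (act x1x2z0 x)"
  by (metis x1x2z0_central act_mult x1x2z0_in_W2)

context
  assumes z0: "\<And>x. act z0 x = 0"
begin

lemma graded_submodule_joint_kernel:
  "graded_submodule W2 sc V0 V1 act {y. act phi0 y = 0 \<and> act phi1 y = 0}"
proof -
  define K where "K = {y. act phi0 y = 0 \<and> act phi1 y = 0}"
  have P0: "Vector_Spaces.linear sc sc (act phi0)" and P1: "Vector_Spaces.linear sc sc (act phi1)"
    and Y: "Vector_Spaces.linear sc sc (act z1')"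
    by (simp_all add: linear_act W2.intros)
  have "subspace K"
    using subspace_inter[OF endo.linear_subspace_kernel[OF P0] endo.linear_subspace_kernel[OF P1]]
    by (simp add: K_def vimage_def Collect_conj_eq)
  moreover have "act g ` K \<subseteq> K" if "g \<in> {phi0, phi1, z0, z1'}" for g
  proof -
    have "act phi0 (act z1' y) = 0" "act phi1 (act z1' y) = 0" if "y \<in> K" for y
      using that act_phi0_z1'[of y] act_z1'_phi1[of y]
      by (simp_all add: K_def endo.linear_0[OF Y] endo.linear_0[OF P0] endo.linear_0[OF P1])
    then show ?thesis
      using that by (auto simp: K_def z0 endo.linear_0[OF P0] endo.linear_0[OF P1])
  qed
  ultimately have "act u ` K \<subseteq> K" if "u \<in> W2" for u
    using W2_stable that by blast
  moreover have "\<exists>a\<in>K \<inter> V0. \<exists>b\<in>K \<inter> V1. y = a + b" if "y \<in> K" for y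
  proof -
    obtain a b where ab: "y = a + b" "a \<in> V0" "b \<in> V1" using homogeneous_decomp by blast
    have "act phi0 ` V0 \<subseteq> V1 \<and> act phi0 ` V1 \<subseteq> V0" "act phi1 ` V0 \<subseteq> V1 \<and> act phi1 ` V1 \<subseteq> V0"
      using act_odd[OF W2_phi0 U_odd_phi0] act_odd[OF W2_phi1 U_odd_phi1] by auto
    then have "a \<in> K" "b \<in> K"
      using homogeneous_components_in_kernel[OF P0 _ _ ab]
        homogeneous_components_in_kernel[OF P1 _ _ ab] \<open>y \<in> K\<close>
      by (auto simp: K_def)
    then show ?thesis using ab by blast
  qed
  ultimately show ?thesis
    using \<open>subspace K\<close> by (simp add: graded_submodule_def K_def)
qed

(* phi0 squares to z0 = 0, and phi1 squares to x1 x2 z0 = phi1 phi0 on this module. *)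
lemma common_kernel_vector:
  assumes "(y :: 'v) \<noteq> 0"
  obtains k where "k \<noteq> 0" "act phi0 k = 0" "act phi1 k = 0"
proof -
  have P1: "Vector_Spaces.linear sc sc (act phi1)" by (simp add: linear_act W2.intros)
  define w where "w = (if act phi0 y = 0 then y else act phi0 y)"
  have w: "w \<noteq> 0" "act phi0 w = 0"
    using assms by (auto simp: w_def act_phi0_phi0 z0)
  define k where "k = (if act phi1 w = 0 then w else act phi1 w)"
  have "act phi1 (act phi1 w) = 0"
    using act_z0_z1'[of w] w(2) by (simp add: act_phi1_phi1 z0 endo.linear_0[OF P1])
  moreover have "act phi0 (act phi1 w) = 0"
    using act_phi0_phi1[of w] w(2) by (simp add: endo.linear_0[OF P1])
  ultimately show ?thesis
    using that[of k] w by (auto simp: k_def)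
qed

end

end

locale simple_W2_module = W2_module sc V0 V1 act
  for sc :: "complex \<Rightarrow> 'v::ab_group_add \<Rightarrow> 'v" and V0 V1 act +
  assumes nontrivial: "\<exists>x::'v. x \<noteq> 0"
    and simple: "graded_submodule W2 sc V0 V1 act S \<Longrightarrow> S = {0} \<or> S = UNIV"

lemma simple_W2_moduleI: "simple_module W2 sc V0 V1 act \<Longrightarrow> simple_W2_module sc V0 V1 act"
  by (simp add: simple_module_def simple_W2_module_def W2_module_def graded_mod_def
      simple_W2_module_axioms_def)

context simple_W2_module
begin

lemma obtain_nonzero_homogeneous:
  obtains v where "v \<noteq> 0" "v \<in> V0 \<union> V1"
  using nontrivial obtain_homogeneous by blast

lemma countable_spanning_set:
  obtains B where "countable B" "span B = UNIV"
proof -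
  obtain v where v: "v \<noteq> 0" "v \<in> V0 \<union> V1" by (rule obtain_nonzero_homogeneous)
  define G where "G = {phi0, phi1, z0, z1'}"
  define H where "H = (\<lambda>ws. foldr act ws v) ` lists G"
  have G: "g \<in> W2" "U_even g \<or> U_odd g" if "g \<in> G" for g
    using that by (auto simp: G_def W2.intros) (auto simp: phi0_eq phi1_eq z0_eq z1'_eq)
  have hom: "act g y \<in> V0 \<union> V1" if "g \<in> G" "y \<in> V0 \<union> V1" for g y
    using G[OF that(1)] act_even[OF G(1)[OF that(1)]] act_odd[OF G(1)[OF that(1)]] that(2) by blast
  have "foldr act ws v \<in> V0 \<union> V1" if "ws \<in> lists G" for ws
    using that by (induct ws) (simp_all add: v(2) hom del: Un_iff)
  then have "H \<subseteq> V0 \<union> V1" by (auto simp: H_def)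
  moreover have "act g ` span H \<subseteq> span H" if "g \<in> G" for g
  proof -
    have "act g ` H \<subseteq> H"
      using that by (auto simp: H_def intro!: image_eqI[where x = "g # _"])
    then have "span (act g ` H) \<subseteq> span H" by (rule span_mono)
    then show ?thesis
      by (simp only: endo.linear_span_image[OF linear_act[OF G(1)[OF that]]])
  qed
  then have "act u ` span H \<subseteq> span H" if "u \<in> W2" for u
    using W2_stable[OF subspace_span _ that] by (simp add: G_def)
  ultimately have "graded_submodule W2 sc V0 V1 act (span H)"
    by (rule graded_submodule_span)
  moreover have "v \<in> span H"
    by (rule span_base) (auto simp: H_def intro!: image_eqI[where x = "[]"])
  ultimately have "span H = UNIV" using simple v(1) by blast
  moreover have "countable H" by (simp add: H_def G_def)
  ultimately show ?thesis using that by blast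
qed

lemma schur_dixmier:
  assumes T: "Vector_Spaces.linear sc sc T"
    and comm: "\<And>u x. u \<in> W2 \<Longrightarrow> T (act u x) = act u (T x)"
    and even: "T ` V0 \<subseteq> V0" "T ` V1 \<subseteq> V1"
  shows "\<exists>c. \<forall>x. T x = sc c x"
proof -
  obtain B where B: "countable B" "span B = UNIV" by (rule countable_spanning_set)
  obtain x :: 'v where x: "x \<noteq> 0" using nontrivial by blast
  obtain c where not_bij: "\<not> bij (\<lambda>y. T y - sc c y)"
    using exists_shift_not_bij[OF B T x] by blast
  define D where "D = (\<lambda>y. T y - sc c y)"
  have D: "Vector_Spaces.linear sc sc D"
    unfolding D_def Vector_Spaces.linear_iff
    by (simp add: vector_space_axioms endo.linear_add[OF T] endo.linear_scale[OF T]
        scale_right_distrib algebra_simps)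
  have D_comm: "D (act u y) = act u (D y)" if "u \<in> W2" for u y
    unfolding D_def using comm[OF that]
    by (simp add: endo.linear_diff[OF linear_act[OF that]]
        endo.linear_scale[OF linear_act[OF that]])
  have D_even: "D ` V0 \<subseteq> V0" "D ` V1 \<subseteq> V1"
    using even subspace_diff[OF subspace_V0] subspace_diff[OF subspace_V1]
      subspace_scale[OF subspace_V0] subspace_scale[OF subspace_V1]
    by (auto simp: D_def)
  have "{y. D y = 0} = {0} \<or> {y. D y = 0} = UNIV"
    using simple graded_submodule_kernel[OF D D_comm D_even] by blast
  moreover have "range D = {0} \<or> range D = UNIV"
    using simple graded_submodule_range[OF D D_comm D_even] by blast
  moreover have "\<not> (inj D \<and> surj D)"
    using not_bij by (simp add: D_def bij_def)
  ultimately have "\<forall>y. D y = 0"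
    using x endo.linear_inj_iff_eq_0[OF D] by auto
  then show ?thesis by (auto simp: D_def)
qed

lemma central_acts_by_scalar:
  assumes g: "g \<in> W2" "U_even g" and comm: "\<And>u x. u \<in> W2 \<Longrightarrow> act g (act u x) = act u (act g x)"
  obtains c where "\<And>x. act g x = sc c x"
proof -
  have "act g ` V0 \<subseteq> V0" "act g ` V1 \<subseteq> V1" using act_even[OF g] by auto
  then show ?thesis using schur_dixmier[OF linear_act[OF g(1)] comm] that by blast
qed

lemma odd_generators_vanish:
  assumes z0: "\<And>x. act z0 x = 0"
  shows "act phi0 x = 0" and "act phi1 x = 0"
proof -
  obtain y :: 'v where "y \<noteq> 0" using nontrivial by blast
  then obtain k where "k \<noteq> 0" "act phi0 k = 0" "act phi1 k = 0"
    using common_kernel_vector[OF z0] by blast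
  then have "{y. act phi0 y = 0 \<and> act phi1 y = 0} = UNIV"
    using simple[OF graded_submodule_joint_kernel[OF z0]] by blast
  then show "act phi0 x = 0" "act phi1 x = 0" by auto
qed

lemma iso_Gamma_or_Pi_Gamma:
  assumes z0: "\<And>x. act z0 x = 0"
  shows "\<exists>t :: complex. \<exists>(G0, G1) \<in> {(UNIV, {0}), ({0}, UNIV)}. \<exists>\<gamma>.
            graded_module W2 ((*) :: complex \<Rightarrow> complex \<Rightarrow> complex) G0 G1 \<gamma> \<and>
            \<gamma> phi0 = (\<lambda>z. 0) \<and> \<gamma> phi1 = (\<lambda>z. 0) \<and> \<gamma> z0 = (\<lambda>z. 0) \<and>
            \<gamma> z1' = (\<lambda>z. t * z) \<and>
            module_iso W2 sc V0 V1 act (*) G0 G1 \<gamma>"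
proof -
  note odd_0 = odd_generators_vanish[OF z0]
  have Y: "Vector_Spaces.linear sc sc (act z1')" by (simp add: linear_act W2.intros)
  have "act z1' (act g x) = act g (act z1' x)" if "g \<in> {phi0, phi1, z0, z1'}" for g x
    using that odd_0 z0 endo.linear_0[OF Y] by auto
  then have "act z1' (act u x) = act u (act z1' x)" if "u \<in> W2" for u x
    using W2_commute[OF Y _ that] by blast
  then obtain t where t: "\<And>x. act z1' x = sc t x"
    using central_acts_by_scalar[OF W2_z1' U_even_z1'] by blast
  obtain v where v: "v \<noteq> 0" "v \<in> V0 \<union> V1" by (rule obtain_nonzero_homogeneous)
  have "act g ` span {v} \<subseteq> span {v}" if "g \<in> {phi0, phi1, z0, z1'}" for g
    using that by (auto simp: odd_0 z0 t span_zero span_scale)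
  then have "graded_submodule W2 sc V0 V1 act (span {v})"
    using graded_submodule_span[of "{v}"] W2_stable[OF subspace_span] v(2) by blast
  then have "span {v} = UNIV" using simple v(1) span_base[of v "{v}"] by blast
  then obtain f where f: "\<And>k. f (sc k v) = k" "(f ` V0, f ` V1) \<in> {(UNIV, {0}), ({0}, UNIV)}"
    "graded_module W2 (*) (f ` V0) (f ` V1) (\<lambda>u. f \<circ> act u \<circ> (\<lambda>k. sc k v))"
    "module_iso W2 sc V0 V1 act (*) (f ` V0) (f ` V1) (\<lambda>u. f \<circ> act u \<circ> (\<lambda>k. sc k v))"
    using graded_module_line[OF v] by blast
  define \<gamma> where "\<gamma> = (\<lambda>u. f \<circ> act u \<circ> (\<lambda>k. sc k v))"
  have "\<gamma> phi0 = (\<lambda>z. 0)" "\<gamma> phi1 = (\<lambda>z. 0)" "\<gamma> z0 = (\<lambda>z. 0)" "\<gamma> z1' = (\<lambda>z. t * z)"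
    using f(1)[of 0] f(1) by (simp_all add: \<gamma>_def fun_eq_iff odd_0 z0 t)
  then show ?thesis
    using f(2-4) unfolding \<gamma>_def[symmetric] by (intro exI[of _ t] bexI[OF _ f(2)]) auto
qed

end

locale nondegenerate_simple_W2_module = simple_W2_module sc V0 V1 act
  for sc :: "complex \<Rightarrow> 'v::ab_group_add \<Rightarrow> 'v" and V0 V1 act +
  fixes s1 s2 :: complex
  assumes act_z0: "act z0 x = sc (s1 + s2) x"
    and act_x1x2z0: "act x1x2z0 x = sc (s1 * s2 * (s1 + s2)) x"
    and sum_nonzero: "s1 + s2 \<noteq> 0"
begin

sublocale phi: anticommuting_pair sc "act phi0" "act phi1" "s1 + s2" "s1 * s2 * (s1 + s2)"
  by (intro anticommuting_pair.intro anticommuting_pair_axioms.intro complex_vs_axioms)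
    (simp_all add: linear_act W2.intros act_phi0_phi0 act_phi1_phi1 act_z0 act_x1x2z0 act_phi0_phi1)

abbreviation xi1 :: "'v \<Rightarrow> 'v" where "xi1 \<equiv> phi.xi1_op s1 s2"
abbreviation xi2 :: "'v \<Rightarrow> 'v" where "xi2 \<equiv> phi.xi2_op s1 s2"

sublocale xi: anticommuting_pair sc xi1 xi2 s1 s2
  by (rule phi.anticommuting_pair_xi_ops) (simp_all add: sum_nonzero)

lemma act_z1'_eq: "act z1' y = sc (s1 * s2) y - xi1 (xi2 y)"
proof -
  have "sc (s1 + s2) (act z1' y) = sc (s1 + s2) (sc (s1 * s2) y - xi1 (xi2 y))"
    using act_z0_z1'[of y] sum_nonzero
    by (simp add: act_z0 act_x1x2z0 phi.xi1_op_xi2_op scale_right_diff_distrib eq_diff_eq)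
  then show ?thesis using sum_nonzero by simp
qed

lemma xi_rep_eq_act: "u \<in> W2 \<Longrightarrow> xi.rep u y = act u y"
proof (induct u arbitrary: y rule: W2.induct)
  case W2_one then show ?case by (simp add: xi.rep_one act_one)
next
  case W2_phi0
  have "xi.rep (Uel 0 1 1 0) y = xi1 y + xi2 y" by (simp add: xi.rep_Uel xi.comb_def)
  then show ?case
    by (simp only: phi0_eq[symmetric] phi.P_eq_xi_ops[OF refl refl sum_nonzero, symmetric])
next
  case W2_phi1
  have "xi.rep (Uel 0 px2 (- px1) 0) y = sc s2 (xi1 y) - sc s1 (xi2 y)"
    by (simp add: xi.rep_Uel xi.comb_def scale_minus_left)
  then show ?case
    by (simp only: phi1_eq[symmetric] phi.Q_eq_xi_ops[OF refl refl sum_nonzero, symmetric])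
next
  case W2_z0
  have "xi.rep (Uel (px1 + px2) 0 0 0) y = sc (s1 + s2) y" by (simp add: xi.rep_Uel xi.comb_def)
  then show ?case by (simp only: z0_eq[symmetric] act_z0)
next
  case W2_z1'
  have "xi.rep (Uel (px1 * px2) 0 0 (- 1)) y = sc (s1 * s2) y - xi1 (xi2 y)"
    by (simp add: xi.rep_Uel xi.comb_def scale_minus_left)
  then show ?case by (simp only: z1'_eq[symmetric] act_z1'_eq)
next
  case (W2_add u v) then show ?case by (simp add: xi.rep_add act_add)
next
  case (W2_smul u k) then show ?case by (simp add: xi.rep_smul act_smul)
next
  case (W2_mult u v) then show ?case by (simp add: xi.rep_mult act_mult)
qed

lemma xi_odd: "xi1 ` V0 \<subseteq> V1" "xi1 ` V1 \<subseteq> V0" "xi2 ` V0 \<subseteq> V1" "xi2 ` V1 \<subseteq> V0"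
  using act_odd[OF W2_phi0 U_odd_phi0] act_odd[OF W2_phi1 U_odd_phi1]
  by (auto simp: phi.xi1_op_def phi.xi2_op_def intro!: subspace_scale subspace_add subspace_diff
      subspace_V0 subspace_V1)

lemma simple_module_xi_rep: "simple_module UNIV sc V0 V1 xi.rep"
  unfolding simple_module_def
proof (intro conjI allI impI nontrivial)
  show "graded_module UNIV sc V0 V1 xi.rep"
    by (rule xi.graded_module_rep[OF grading xi_odd])
  fix S assume "graded_submodule UNIV sc V0 V1 xi.rep S"
  then have "graded_submodule W2 sc V0 V1 act S"
    by (simp add: graded_submodule_def xi_rep_eq_act[symmetric] cong: image_cong)
  then show "S = {0} \<or> S = UNIV" by (rule simple)
qed

lemma iso_restriction_of_simple_U_module:
  "\<exists>M0 M1 \<rho>. simple_module UNIV sc M0 M1 \<rho> \<and> \<rho> x1 = sc s1 \<and> \<rho> x2 = sc s2 \<and>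
     module_iso W2 sc V0 V1 act sc M0 M1 \<rho>"
proof (intro exI conjI)
  show "simple_module UNIV sc V0 V1 xi.rep" by (rule simple_module_xi_rep)
  show "xi.rep x1 = sc s1" "xi.rep x2 = sc s2"
    by (simp_all add: fun_eq_iff x1_eq x2_eq xi.rep_Uel xi.comb_def)
  show "module_iso W2 sc V0 V1 act sc V0 V1 xi.rep"
    by (rule module_iso_agreeing_action) (rule xi_rep_eq_act)
qed

end

lemma obtain_sum_product_roots:
  fixes c d :: complex
  assumes c: "c \<noteq> 0"
  obtains s1 s2 where "s1 + s2 = c" "s1 * s2 = d"
    and "(s1 \<noteq> - s2 \<and> s1 \<noteq> 0 \<and> s2 \<noteq> 0) \<or> (s1 \<noteq> 0 \<and> s2 = 0)"
proof (cases "d = 0")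
  case True
  then show ?thesis using c by (intro that[of c 0]) auto
next
  case False
  define r where "r = csqrt (c\<^sup>2 - 4 * d)"
  have "r\<^sup>2 = c\<^sup>2 - 4 * d" unfolding r_def by simp
  then have "(c + r) / 2 + (c - r) / 2 = c" "(c + r) / 2 * ((c - r) / 2) = d"
    by (simp_all add: field_simps power2_eq_square)
  moreover from this False c
  have "(c + r) / 2 \<noteq> - ((c - r) / 2) \<and> (c + r) / 2 \<noteq> 0 \<and> (c - r) / 2 \<noteq> 0"
    by (metis add_eq_0_iff2 mult_zero_left mult_zero_right)
  ultimately show ?thesis by (intro that) auto
qed

theorem lemma4p3:
  fixes sc :: "complex \<Rightarrow> 'v::ab_group_add \<Rightarrow> 'v"
    and V0 V1 :: "'v set"
    and act :: "U \<Rightarrow> 'v \<Rightarrow> 'v"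
  assumes "simple_module W2 sc V0 V1 act"
  shows "(\<exists>s1 s2 :: complex.
            ((s1 \<noteq> - s2 \<and> s1 \<noteq> 0 \<and> s2 \<noteq> 0) \<or> (s1 \<noteq> 0 \<and> s2 = 0)) \<and>
            (\<exists>M0 M1 \<rho>. simple_module UNIV sc M0 M1 \<rho> \<and>
                 \<rho> x1 = sc s1 \<and> \<rho> x2 = sc s2 \<and>
                 module_iso W2 sc V0 V1 act sc M0 M1 \<rho>))
       \<or> (\<exists>t :: complex. \<exists>(G0, G1) \<in> {(UNIV, {0}), ({0}, UNIV)}. \<exists>\<gamma>.
            graded_module W2 ((*) :: complex \<Rightarrow> complex \<Rightarrow> complex) G0 G1 \<gamma> \<and>
            \<gamma> phi0 = (\<lambda>z. 0) \<and> \<gamma> phi1 = (\<lambda>z. 0) \<and> \<gamma> z0 = (\<lambda>z. 0) \<and>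
            \<gamma> z1' = (\<lambda>z. t * z) \<and>
            module_iso W2 sc V0 V1 act (*) G0 G1 \<gamma>)"
proof -
  interpret simple_W2_module sc V0 V1 act by (rule simple_W2_moduleI[OF assms])
  obtain c where c: "\<And>x. act z0 x = sc c x"
    using central_acts_by_scalar[OF W2_z0 U_even_z0 act_z0_commute] by blast
  show ?thesis
  proof (cases "c = 0")
    case True
    then show ?thesis using iso_Gamma_or_Pi_Gamma c by simp
  next
    case False
    obtain q where q: "\<And>x. act x1x2z0 x = sc q x"
      using central_acts_by_scalar[OF x1x2z0_in_W2 U_even_x1x2z0 act_x1x2z0_commute] by blast
    obtain s1 s2 where s: "s1 + s2 = c" "s1 * s2 = q / c"
      and cases: "(s1 \<noteq> - s2 \<and> s1 \<noteq> 0 \<and> s2 \<noteq> 0) \<or> (s1 \<noteq> 0 \<and> s2 = 0)"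
      using obtain_sum_product_roots[OF False] by blast
    interpret nondegenerate_simple_W2_module sc V0 V1 act s1 s2
      by (intro nondegenerate_simple_W2_module.intro simple_W2_moduleI[OF assms]
          nondegenerate_simple_W2_module_axioms.intro) (simp_all add: c q s False)
    show ?thesis using iso_restriction_of_simple_U_module cases by blast
  qed
qed

end
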